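(* (LipSDP-Neuron upper bound for two-layer networks.) Let $W\in\mathbb{R}^{n\times m}$, $u\in\mathbb{R}^{1\times n}$ and real numbers $a\le b$. Suppose $\zeta\ge0$ and $\lambda\in\mathbb{R}^n_+$ are such that, with $T=\mathrm{diag}(\lambda)$, $$\begin{pmatrix}-2ab\,W^TTW-\zeta I_m& (a+b)W^TT\\ (a+b)TW& -2T+u^Tu\end{pmatrix}\preceq 0 .$$ Then $$\sqrt{\zeta}\;\ge\;\max_{y\in[a,b]^n}\big\|W^T\mathrm{diag}(y)u^T\big\|_2 .$$ In particular (with $a=0$, $b=1$) the optimal value of the program $\min\{\sqrt\zeta\}$ subject to these constraints is an upper bound on the $\ell_2$-FGL $\max_{y\in\{0,1\}^n}\|W^T\mathrm{diag}(y)u^T\|_2$ of the ReLU network $x\mapsto u\,\mathrm{ReLU}(Wx)$.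
   Context: $\mathrm{diag}(v)$ is the diagonal matrix with diagonal $v$; $I_m$ is the $m\times m$ identity; $P\preceq0$ means $-P$ is positive semidefinite; $\mathbb{R}_+=[0,\infty)$. *)

theory Defs
  imports "HOL-Analysis.Analysis"
begin

definition diagm :: "real ^ 'n \<Rightarrow> real ^ 'n ^ 'n" where
  "diagm v = (\<chi> i j. if i = j then v $ i else 0)"

definition neg_semidef :: "real ^ 'k ^ 'k \<Rightarrow> bool" where
  "neg_semidef P \<longleftrightarrow> transpose P = P \<and> (\<forall>x. x \<bullet> (P *v x) \<le> 0)"

definition block_mat ::
  "real ^ 'm ^ 'm \<Rightarrow> real ^ 'n ^ 'm \<Rightarrow> real ^ 'm ^ 'n \<Rightarrow> real ^ 'n ^ 'n
    \<Rightarrow> real ^ ('m + 'n) ^ ('m + 'n)" where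
  "block_mat A B C D = (\<chi> i j. case (i, j) of
      (Inl p, Inl q) \<Rightarrow> A $ p $ q
    | (Inl p, Inr q) \<Rightarrow> B $ p $ q
    | (Inr p, Inl q) \<Rightarrow> C $ p $ q
    | (Inr p, Inr q) \<Rightarrow> D $ p $ q)"

text \<open>u^T u for a row vector u (outer product).\<close>
definition outer :: "real ^ 'n \<Rightarrow> real ^ 'n ^ 'n" where
  "outer u = (\<chi> i j. u $ i * u $ j)"

end

theory Submission
  imports Defs
begin

text \<open>Test the block quadratic form on the vector \<open>(x, diag(y) W x)\<close>. The \<open>\<lambda>\<close>-weighted part of the
  form becomes \<open>2 \<Sum>\<^sub>i \<lambda>\<^sub>i (y\<^sub>i - a)(b - y\<^sub>i) (W x)\<^sub>i\<^sup>2 \<ge> 0\<close>, so negative semidefiniteness leaves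
  \<open>(u \<bullet> diag(y) W x)\<^sup>2 \<le> \<zeta> \<parallel>x\<parallel>\<^sup>2\<close>. For \<open>x = v = W\<^sup>T diag(y) u\<^sup>T\<close> the left side is \<open>\<parallel>v\<parallel>\<^sup>4\<close>,
  whence \<open>\<parallel>v\<parallel> \<le> \<surd>\<zeta>\<close>.\<close>

definition join_vec :: "real ^ 'm \<Rightarrow> real ^ 'n \<Rightarrow> real ^ ('m + 'n)" where
  "join_vec x z = (\<chi> k. case k of Inl p \<Rightarrow> x $ p | Inr q \<Rightarrow> z $ q)"

lemma sum_UNIV_Plus:
  fixes f :: "('a::finite + 'b::finite) \<Rightarrow> 'c::comm_monoid_add"
  shows "sum f UNIV = (\<Sum>p\<in>UNIV. f (Inl p)) + (\<Sum>q\<in>UNIV. f (Inr q))"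
  using sum.Plus[of "UNIV :: 'a set" "UNIV :: 'b set" f] by (simp add: UNIV_Plus_UNIV)

lemma inner_block_mat_join_vec:
  "join_vec x z \<bullet> (block_mat A B C D *v join_vec x z)
     = x \<bullet> (A *v x) + x \<bullet> (B *v z) + z \<bullet> (C *v x) + z \<bullet> (D *v z)"
  unfolding join_vec_def inner_vec_def matrix_vector_mult_def block_mat_def
  by (simp add: sum_UNIV_Plus sum_distrib_left sum.distrib algebra_simps)

lemma diagm_mult_vec_nth [simp]: "(diagm v *v x) $ i = v $ i * x $ i"
  unfolding diagm_def matrix_vector_mult_def
  by (simp add: if_distrib[of "\<lambda>c. c * _"] cong: if_cong)

lemma inner_diagm: "p \<bullet> (diagm v *v q) = (\<Sum>i\<in>UNIV. v $ i * p $ i * q $ i)"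
  by (simp add: inner_vec_def algebra_simps)

lemma inner_transpose_mult_vec: "(x :: real ^ 'm) \<bullet> (transpose W *v w) = (W *v x) \<bullet> w"
  by (metis dot_lmul_matrix inner_commute transpose_matrix_vector)

lemma inner_outer: "z \<bullet> (outer u *v z) = (u \<bullet> z)\<^sup>2"
  by (simp add: outer_def inner_vec_def matrix_vector_mult_def power2_eq_square
      sum_distrib_left sum_distrib_right algebra_simps)

lemma lipsdp_quadratic_form:
  fixes W :: "real ^ 'm ^ 'n" and u lam y :: "real ^ 'n" and x :: "real ^ 'm"
  defines "s \<equiv> W *v x"
  shows "join_vec x (diagm y *v s) \<bullet> (block_mat
           ((- (2 * a * b)) *\<^sub>R (transpose W ** diagm lam ** W) - \<zeta> *\<^sub>R mat 1)
           ((a + b) *\<^sub>R (transpose W ** diagm lam))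
           ((a + b) *\<^sub>R (diagm lam ** W))
           ((- 2) *\<^sub>R diagm lam + outer u) *v join_vec x (diagm y *v s))
       = 2 * (\<Sum>i\<in>UNIV. lam $ i * (y $ i - a) * (b - y $ i) * (s $ i)\<^sup>2)
         + (u \<bullet> (diagm y *v s))\<^sup>2 - \<zeta> * (x \<bullet> x)"
proof -
  define z where "z = diagm y *v s"
  have "x \<bullet> ((transpose W ** diagm lam ** W) *v x) = (\<Sum>i\<in>UNIV. lam $ i * s $ i * s $ i)"
    by (simp add: s_def inner_diagm inner_transpose_mult_vec
        del: transpose_matrix_vector flip: matrix_vector_mul_assoc matrix_mul_assoc)
  then have AA: "x \<bullet> (((- (2 * a * b)) *\<^sub>R (transpose W ** diagm lam ** W) - \<zeta> *\<^sub>R mat 1) *v x)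
      = - (2 * a * b) * (\<Sum>i\<in>UNIV. lam $ i * s $ i * s $ i) - \<zeta> * (x \<bullet> x)"
    by (simp add: matrix_vector_mult_diff_rdistrib inner_diff_right
        del: scaleR_minus_left flip: scaleR_matrix_vector_assoc)
  have AB: "x \<bullet> (((a + b) *\<^sub>R (transpose W ** diagm lam)) *v z)
      = (a + b) * (\<Sum>i\<in>UNIV. lam $ i * y $ i * s $ i * s $ i)"
    by (simp add: z_def s_def inner_diagm inner_transpose_mult_vec algebra_simps
        del: transpose_matrix_vector flip: scaleR_matrix_vector_assoc matrix_vector_mul_assoc)
  have BA: "z \<bullet> (((a + b) *\<^sub>R (diagm lam ** W)) *v x)
      = (a + b) * (\<Sum>i\<in>UNIV. lam $ i * y $ i * s $ i * s $ i)"
    by (simp add: z_def s_def inner_diagm algebra_simps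
        flip: scaleR_matrix_vector_assoc matrix_vector_mul_assoc)
  have BB: "z \<bullet> (((- 2) *\<^sub>R diagm lam + outer u) *v z)
      = - 2 * (\<Sum>i\<in>UNIV. lam $ i * y $ i * y $ i * s $ i * s $ i) + (u \<bullet> z)\<^sup>2"
    by (simp add: z_def inner_diagm inner_outer matrix_vector_mult_add_rdistrib
        inner_add_right algebra_simps flip: scaleR_matrix_vector_assoc)
  have "2 * (\<Sum>i\<in>UNIV. lam $ i * (y $ i - a) * (b - y $ i) * (s $ i)\<^sup>2)
      = - (2 * a * b) * (\<Sum>i\<in>UNIV. lam $ i * s $ i * s $ i)
        + 2 * ((a + b) * (\<Sum>i\<in>UNIV. lam $ i * y $ i * s $ i * s $ i))
        - 2 * (\<Sum>i\<in>UNIV. lam $ i * y $ i * y $ i * s $ i * s $ i)"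
    by (simp add: sum_distrib_left sum.distrib sum_subtractf sum_negf power2_eq_square algebra_simps)
  then show ?thesis
    unfolding inner_block_mat_join_vec z_def[symmetric] AA AB BA BB by simp
qed

lemma le_sqrt_if_power4_le:
  fixes t \<zeta> :: real
  assumes "0 \<le> \<zeta>" and "t ^ 4 \<le> \<zeta> * t\<^sup>2"
  shows "\<bar>t\<bar> \<le> sqrt \<zeta>"
proof -
  have "t\<^sup>2 \<le> \<zeta>"
  proof (cases "t = 0")
    case False
    then have "t\<^sup>2 * t\<^sup>2 \<le> \<zeta> * t\<^sup>2" and "0 < t\<^sup>2"
      using assms(2) by (simp_all flip: power_add)
    then show ?thesis using mult_le_cancel_right_pos by blast
  qed (use assms(1) in simp)
  then show ?thesis by (simp add: real_le_rsqrt)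
qed

theorem mainTheorem8:
  fixes W :: "real ^ 'm ^ 'n" and u :: "real ^ 'n" and a b \<zeta> :: real
    and lam :: "real ^ 'n"
  assumes "a \<le> b"
    and "\<zeta> \<ge> 0"
    and "\<forall>i. lam $ i \<ge> 0"
    and "neg_semidef (block_mat
           ((- (2 * a * b)) *\<^sub>R (transpose W ** diagm lam ** W) - \<zeta> *\<^sub>R mat 1)
           ((a + b) *\<^sub>R (transpose W ** diagm lam))
           ((a + b) *\<^sub>R (diagm lam ** W))
           ((- 2) *\<^sub>R diagm lam + outer u))"
  shows "\<forall>y :: real ^ 'n. (\<forall>i. a \<le> y $ i \<and> y $ i \<le> b) \<longrightarrow>
           norm ((transpose W ** diagm y) *v u) \<le> sqrt \<zeta>"
proof (intro allI impI)
  fix y :: "real ^ 'n"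
  assume y: "\<forall>i. a \<le> y $ i \<and> y $ i \<le> b"
  define v where "v = (transpose W ** diagm y) *v u"
  have u_v: "u \<bullet> (diagm y *v (W *v v)) = v \<bullet> v"
    by (simp add: v_def inner_diagm inner_transpose_mult_vec algebra_simps
        del: transpose_matrix_vector flip: matrix_vector_mul_assoc)
  have "0 \<le> (\<Sum>i\<in>UNIV. lam $ i * (y $ i - a) * (b - y $ i) * ((W *v v) $ i)\<^sup>2)"
    using assms(3) y by (intro sum_nonneg) simp
  moreover have "2 * (\<Sum>i\<in>UNIV. lam $ i * (y $ i - a) * (b - y $ i) * ((W *v v) $ i)\<^sup>2)
      + (u \<bullet> (diagm y *v (W *v v)))\<^sup>2 - \<zeta> * (v \<bullet> v) \<le> 0"
    using assms(4) unfolding neg_semidef_def lipsdp_quadratic_form[symmetric] by blast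
  ultimately have "(v \<bullet> v)\<^sup>2 \<le> \<zeta> * (v \<bullet> v)"
    unfolding u_v by linarith
  then have "norm v ^ 4 \<le> \<zeta> * (norm v)\<^sup>2"
    by (simp add: dot_square_norm flip: power_mult)
  then show "norm v \<le> sqrt \<zeta>"
    using le_sqrt_if_power4_le[OF assms(2)] by fastforce
qed

end
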